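(* Let $\mathcal{P}$ be a family of probability distributions on a domain $\mathcal{X}$, let $\theta:\mathcal{P}\to\Theta\subset\mathbb{R}$, let $\alpha\in[0,1]$ and $t:\mathbb{N}\to\mathbb{R}_+$. Suppose $\{P_v\}_{v\in\mathcal{V}}\subset\mathcal{P}$ is a sub-family indexed by $\mathcal{V}=\{0,1\}^\infty$ with parameter separation $\{\delta_k\}_{k\in\mathbb{N}}$, i.e. for all $k\in\mathbb{N}$ and all $v,v'\in\mathcal{V}$ with $v_{1:k}\neq v'_{1:k}$ we have $\delta_k\le|\theta(P_v)-\theta(P_{v'})|$. Suppose $\{\hat\theta_n\}_{n\in\mathbb{N}}$ is an $(\alpha,t(\cdot))$-estimator. Then, for $n_k=\inf\{n: t(n)<\delta_k/2\}$, there exists an $(\alpha,\{n_k\})$-test for the family $\{P_v\}_{v\in\mathcal{V}}$.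
   Context: For $v\in\mathcal{V}=\{0,1\}^\infty$ and $k\le l$, $v_{k:l}=(v_k,\dots,v_l)$. Observations $X_1,X_2,\dots$ are i.i.d. from a distribution $P$; an estimator sequence $\{\hat\theta_n\}$ consists of functions $\hat\theta_n(X_{1:n})$. It is an $(\alpha,t(\cdot))$-estimator if for all $P\in\mathcal{P}$, $\mathbb{P}_{X_i\sim P\text{ i.i.d.}}\big(|\hat\theta_n(X_{1:n})-\theta(P)|\le t(n)\text{ for all }n\in\mathbb{N}\big)\ge1-\alpha$. For a family $\{P_v\}_{v\in\mathcal{V}}$, let $\mathbb{P}_v$ denote the probability under which $X_1,X_2,\dots$ are i.i.d. $P_v$. A sequence of $\{0,1\}$-valued randomized tests $\{\hat V_k\}_{k\in\mathbb{N}}$, with $\hat V_k$ a (randomized) function of $X_{1:n_k}$, is an $(\alpha,\{n_k\})$-test if for all $v\in\mathcal{V}$, $\mathbb{P}_v(\hat V_k(X_{1:n_k})=v_k\text{ for all }k\in\mathbb{N})\ge1-\alpha$. *)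

theory Defs
  imports "HOL-Probability.Probability"
begin

text \<open>Law of an i.i.d. sequence X_1, X_2, ... with X_i distributed as P;
  X_i is the coordinate omega (i - 1).\<close>
definition iid :: "'x measure \<Rightarrow> (nat \<Rightarrow> 'x) measure" where
  "iid P = PiM UNIV (\<lambda>_. P)"

definition sample :: "(nat \<Rightarrow> 'x) \<Rightarrow> nat \<Rightarrow> 'x list" where
  "sample \<omega> n = map \<omega> [0..<n]"

text \<open>(alpha, t)-estimator for theta over the family Ps (distributions on the
  measurable space M). The n-th estimator is a (measurable) function of X_{1:n};
  natural numbers start at 1.\<close>
definition is_estimator ::
  "'x measure \<Rightarrow> 'x measure set \<Rightarrow> ('x measure \<Rightarrow> real) \<Rightarrow> real \<Rightarrow> (nat \<Rightarrow> real)
   \<Rightarrow> (nat \<Rightarrow> 'x list \<Rightarrow> real) \<Rightarrow> bool" where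
  "is_estimator M Ps \<theta> \<alpha> t \<theta>hat \<longleftrightarrow>
     (\<forall>n\<ge>1. (\<lambda>\<omega>. \<theta>hat n (sample \<omega> n)) \<in> borel_measurable (iid M)) \<and>
     (\<forall>P\<in>Ps. measure (iid P)
        {\<omega> \<in> space (iid P). \<forall>n\<ge>1. \<bar>\<theta>hat n (sample \<omega> n) - \<theta> P\<bar> \<le> t n} \<ge> 1 - \<alpha>)"

text \<open>(alpha, {n_k})-test for the family Pv indexed by V = {0,1}^infinity
  (bits v_1, v_2, ...; v 0 is unused). Tests are randomized: V k takes
  X_{1:n_k} and an auxiliary random variable U ~ R independent of the data.\<close>
definition is_test ::
  "'x measure \<Rightarrow> ((nat \<Rightarrow> bool) \<Rightarrow> 'x measure) \<Rightarrow> real \<Rightarrow> (nat \<Rightarrow> nat)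
   \<Rightarrow> real measure \<Rightarrow> (nat \<Rightarrow> 'x list \<Rightarrow> real \<Rightarrow> bool) \<Rightarrow> bool" where
  "is_test M Pv \<alpha> nk R V \<longleftrightarrow>
     prob_space R \<and>
     (\<forall>k\<ge>1. (\<lambda>(\<omega>, u). V k (sample \<omega> (nk k)) u)
               \<in> measurable (iid M \<Otimes>\<^sub>M R) (count_space UNIV)) \<and>
     (\<forall>v. measure (iid (Pv v) \<Otimes>\<^sub>M R)
        {(\<omega>, u) \<in> space (iid (Pv v) \<Otimes>\<^sub>M R). \<forall>k\<ge>1. V k (sample \<omega> (nk k)) u = v k}
          \<ge> 1 - \<alpha>)"

end

theory Submission
  imports Defs
begin

text \<open>Estimate \<open>\<theta>\<close> with \<open>\<hat>\<theta>\<^sub>n\<^sub>k\<close> and declare \<open>v\<^sub>k = 1\<close> iff the estimate lies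
  within \<open>\<delta>\<^sub>k/2\<close> of \<open>\<theta>(P\<^sub>w)\<close> for some \<open>w\<close> with \<open>w\<^sub>k = 1\<close>. Since \<open>t(n\<^sub>k) < \<delta>\<^sub>k/2\<close>,
  on the event where the estimator is accurate at every sample size the estimate
  is within \<open>\<delta>\<^sub>k/2\<close> of \<open>\<theta>(P\<^sub>v)\<close>, and separation rules out \<open>\<delta>\<^sub>k/2\<close>-closeness to any
  \<open>\<theta>(P\<^sub>w)\<close> with \<open>w\<^sub>k \<noteq> v\<^sub>k\<close>; so all bits are decoded correctly with probability
  at least \<open>1 - \<alpha>\<close>. No randomization is needed.\<close>

definition bit_region :: "((nat \<Rightarrow> bool) \<Rightarrow> real) \<Rightarrow> real \<Rightarrow> nat \<Rightarrow> real set" where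
  "bit_region c r k = (\<Union>w\<in>{w. w k}. ball (c w) r)"

lemma open_bit_region: "open (bit_region c r k)"
  unfolding bit_region_def by auto

lemma mem_bit_region_iff:
  fixes c :: "(nat \<Rightarrow> bool) \<Rightarrow> real"
  assumes separated: "\<And>w. v k \<noteq> w k \<Longrightarrow> 2 * r \<le> \<bar>c v - c w\<bar>"
    and close: "\<bar>x - c v\<bar> < r"
  shows "x \<in> bit_region c r k \<longleftrightarrow> v k"
proof
  assume "x \<in> bit_region c r k"
  then obtain w where "w k" and close_w: "\<bar>x - c w\<bar> < r"
    unfolding bit_region_def by (auto simp: dist_real_def abs_minus_commute)
  show "v k"
  proof (rule ccontr)
    assume "\<not> v k"
    with \<open>w k\<close> have "2 * r \<le> \<bar>c v - c w\<bar>"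
      by (intro separated) auto
    with close close_w show False
      by linarith
  qed
next
  assume "v k"
  moreover have "x \<in> ball (c v) r"
    using close by (simp add: dist_real_def abs_minus_commute)
  ultimately show "x \<in> bit_region c r k"
    unfolding bit_region_def by blast
qed

lemma mem_bit_region_iff_separated:
  fixes c :: "(nat \<Rightarrow> bool) \<Rightarrow> real"
  assumes separation: "\<forall>k\<ge>1. \<forall>v v'. (\<exists>i\<in>{1..k}. v i \<noteq> v' i) \<longrightarrow> \<delta> k \<le> \<bar>c v - c v'\<bar>"
    and "k \<ge> 1" and "\<bar>x - c v\<bar> < \<delta> k / 2"
  shows "x \<in> bit_region c (\<delta> k / 2) k \<longleftrightarrow> v k"
proof (rule mem_bit_region_iff)
  fix w
  assume "v k \<noteq> w k"
  with \<open>k \<ge> 1\<close> have "\<exists>i\<in>{1..k}. v i \<noteq> w i"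
    by auto
  with separation \<open>k \<ge> 1\<close> show "2 * (\<delta> k / 2) \<le> \<bar>c v - c w\<bar>"
    by simp
qed fact

lemma sets_iid_cong: "sets P = sets M \<Longrightarrow> sets (iid P) = sets (iid M)"
  unfolding iid_def by (rule sets_PiM_cong) auto

lemma prob_space_iid: "prob_space P \<Longrightarrow> prob_space (iid P)"
  unfolding iid_def by (rule prob_space_PiM) auto

lemma (in prob_space) measure_pair_measure_Times_space:
  assumes "A \<in> sets N"
  shows "measure (N \<Otimes>\<^sub>M M) (A \<times> space M) = measure N A"
  using emeasure_pair_measure_Times[OF assms sets.top]
  by (simp add: measure_def emeasure_space_1)

lemma sets_iid_decoding_event:
  fixes T :: "nat \<Rightarrow> 'x list \<Rightarrow> bool"
  assumes "sets P = sets M"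
    and "\<And>k. k \<ge> 1 \<Longrightarrow> Measurable.pred (iid M) (\<lambda>\<omega>. T k (sample \<omega> (nk k)))"
  shows "{\<omega> \<in> space (iid P). \<forall>k\<ge>1. T k (sample \<omega> (nk k)) = v k} \<in> sets (iid P)"
proof -
  have pred_T: "Measurable.pred (iid P) (\<lambda>\<omega>. T k (sample \<omega> (nk k)))" if "k \<ge> 1" for k
    unfolding measurable_cong_sets[OF sets_iid_cong[OF assms(1)] refl] by (rule assms(2)[OF that])
  have "Measurable.pred (iid P) (\<lambda>\<omega>. 1 \<le> k \<longrightarrow> T k (sample \<omega> (nk k)) = v k)" for k
  proof (rule pred_intros_imp')
    assume "1 \<le> k"
    show "Measurable.pred (iid P) (\<lambda>\<omega>. T k (sample \<omega> (nk k)) = v k)"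
      by (rule pred_intros_logic(6)[OF pred_T[OF \<open>1 \<le> k\<close>] measurable_const]) simp
  qed
  then have "Measurable.pred (iid P) (\<lambda>\<omega>. \<forall>k. 1 \<le> k \<longrightarrow> T k (sample \<omega> (nk k)) = v k)"
    by (intro pred_intros_countable(1))
  then show ?thesis
    by (simp only: pred_def)
qed

lemma is_test_deterministicI:
  fixes T :: "nat \<Rightarrow> 'x list \<Rightarrow> bool"
  assumes prob_space_Pv: "\<And>v. prob_space (Pv v)"
    and sets_Pv: "\<And>v. sets (Pv v) = sets M"
    and measurable_T: "\<And>k. k \<ge> 1 \<Longrightarrow> Measurable.pred (iid M) (\<lambda>\<omega>. T k (sample \<omega> (nk k)))"
    and likely: "\<And>v. 1 - \<alpha> \<le> measure (iid (Pv v)) {\<omega> \<in> space (iid (Pv v)). G v \<omega>}"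
    and correct: "\<And>v \<omega> k. G v \<omega> \<Longrightarrow> k \<ge> 1 \<Longrightarrow> T k (sample \<omega> (nk k)) = v k"
  shows "is_test M Pv \<alpha> nk (return borel 0) (\<lambda>k xs u. T k xs)"
proof -
  let ?R = "return borel (0::real)"
  interpret R: prob_space ?R
    by (rule prob_space_return) simp
  have measurable_test: "(\<lambda>(\<omega>, u). T k (sample \<omega> (nk k)))
      \<in> measurable (iid M \<Otimes>\<^sub>M ?R) (count_space UNIV)" if "k \<ge> 1" for k
    unfolding case_prod_beta by (rule measurable_compose[OF measurable_fst measurable_T[OF that]])
  have correct_test: "1 - \<alpha> \<le> measure (iid (Pv v) \<Otimes>\<^sub>M ?R)
      {(\<omega>, u) \<in> space (iid (Pv v) \<Otimes>\<^sub>M ?R). \<forall>k\<ge>1. T k (sample \<omega> (nk k)) = v k}" for v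
  proof -
    let ?decoded = "{\<omega> \<in> space (iid (Pv v)). \<forall>k\<ge>1. T k (sample \<omega> (nk k)) = v k}"
    interpret prob_space "iid (Pv v)"
      by (rule prob_space_iid[OF prob_space_Pv])
    have decoded: "?decoded \<in> sets (iid (Pv v))"
      by (rule sets_iid_decoding_event[where T = T and nk = nk, OF sets_Pv measurable_T])
    have "{\<omega> \<in> space (iid (Pv v)). G v \<omega>} \<subseteq> ?decoded"
      using correct by auto
    from likely[of v] finite_measure_mono[OF this decoded]
    have "1 - \<alpha> \<le> measure (iid (Pv v)) ?decoded"
      by linarith
    also have "\<dots> = measure (iid (Pv v) \<Otimes>\<^sub>M ?R) (?decoded \<times> space ?R)"
      by (rule R.measure_pair_measure_Times_space[OF decoded, symmetric])
    also have "?decoded \<times> space ?R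
        = {(\<omega>, u) \<in> space (iid (Pv v) \<Otimes>\<^sub>M ?R). \<forall>k\<ge>1. T k (sample \<omega> (nk k)) = v k}"
      by (auto simp: space_pair_measure)
    finally show ?thesis .
  qed
  show ?thesis
    unfolding is_test_def using R.prob_space_axioms measurable_test correct_test by blast
qed

theorem proposition1:
  fixes M :: "'x measure" and Ps :: "'x measure set" and \<theta> :: "'x measure \<Rightarrow> real"
    and \<alpha> :: real and t :: "nat \<Rightarrow> real"
    and Pv :: "(nat \<Rightarrow> bool) \<Rightarrow> 'x measure" and \<delta> :: "nat \<Rightarrow> real"
    and \<theta>hat :: "nat \<Rightarrow> 'x list \<Rightarrow> real"
  assumes family: "\<forall>P\<in>Ps. prob_space P \<and> sets P = sets M"
    and alpha: "0 \<le> \<alpha>" "\<alpha> \<le> 1"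
    and t_nonneg: "\<forall>n. 0 \<le> t n"
    and subfamily: "\<forall>v. Pv v \<in> Ps"
    and separation: "\<forall>k\<ge>1. \<forall>v v'. (\<exists>i\<in>{1..k}. v i \<noteq> v' i) \<longrightarrow>
                        \<delta> k \<le> \<bar>\<theta> (Pv v) - \<theta> (Pv v')\<bar>"
    and estimator: "is_estimator M Ps \<theta> \<alpha> t \<theta>hat"
    and nk_finite: "\<forall>k\<ge>1. \<exists>n\<ge>1. t n < \<delta> k / 2"
  shows "\<exists>R V. is_test M Pv \<alpha> (\<lambda>k. LEAST n. 1 \<le> n \<and> t n < \<delta> k / 2) R V"
proof -
  define nk where "nk = (\<lambda>k. LEAST n. 1 \<le> n \<and> t n < \<delta> k / 2)"
  define T where "T = (\<lambda>k xs. \<theta>hat (nk k) xs \<in> bit_region (\<lambda>w. \<theta> (Pv w)) (\<delta> k / 2) k)"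
  have nk: "1 \<le> nk k \<and> t (nk k) < \<delta> k / 2" if "k \<ge> 1" for k
    unfolding nk_def using nk_finite that by (metis (mono_tags, lifting) LeastI)
  have "is_test M Pv \<alpha> nk (return borel 0) (\<lambda>k xs u. T k xs)"
  proof (rule is_test_deterministicI[where G = "\<lambda>v \<omega>. \<forall>n\<ge>1. \<bar>\<theta>hat n (sample \<omega> n) - \<theta> (Pv v)\<bar> \<le> t n"])
    show "prob_space (Pv v)" for v
      using family subfamily by blast
    show "sets (Pv v) = sets M" for v
      using family subfamily by blast
    show "Measurable.pred (iid M) (\<lambda>\<omega>. T k (sample \<omega> (nk k)))" if "k \<ge> 1" for k
      unfolding T_def
    proof (rule pred_sets2[OF borel_open[OF open_bit_region]])
      show "(\<lambda>\<omega>. \<theta>hat (nk k) (sample \<omega> (nk k))) \<in> borel_measurable (iid M)"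
        using estimator nk[OF that] unfolding is_estimator_def by blast
    qed
    show "1 - \<alpha> \<le> measure (iid (Pv v))
        {\<omega> \<in> space (iid (Pv v)). \<forall>n\<ge>1. \<bar>\<theta>hat n (sample \<omega> n) - \<theta> (Pv v)\<bar> \<le> t n}" for v
      using estimator subfamily unfolding is_estimator_def by blast
    show "T k (sample \<omega> (nk k)) = v k"
      if accurate: "\<forall>n\<ge>1. \<bar>\<theta>hat n (sample \<omega> n) - \<theta> (Pv v)\<bar> \<le> t n" and "k \<ge> 1" for v \<omega> k
    proof -
      have "\<bar>\<theta>hat (nk k) (sample \<omega> (nk k)) - \<theta> (Pv v)\<bar> \<le> t (nk k)"
        using accurate nk[OF \<open>k \<ge> 1\<close>] by blast
      with nk[OF \<open>k \<ge> 1\<close>] have "\<bar>\<theta>hat (nk k) (sample \<omega> (nk k)) - \<theta> (Pv v)\<bar> < \<delta> k / 2"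
        by linarith
      then show ?thesis
        unfolding T_def by (rule mem_bit_region_iff_separated[OF separation \<open>k \<ge> 1\<close>])
    qed
  qed
  then show ?thesis
    unfolding nk_def by blast
qed

end
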